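(* In the timely decision problem described in the context, fix $\eta$ and a state $(\mu_t,\nu_t)$ with $\nu_t=1$ and $\mu_t\notin\mathcal{T}(\eta)$. Take the uncertainty function $U=V^*(\cdot,\cdot;\eta)$ in the definition of the surprise $I_t$. Then there is a function $h$, increasing in each of its two arguments, such that the optimal acquisition is $$\lambda_t^*=\arg\sup_{\lambda\in\Lambda}\Big(h\big(I_t(\lambda),S_t(\lambda)\big)-\eta_{c,\lambda}c_\lambda\Big),$$ i.e. the optimal acquisition trades off surprise and suspense in addition to the immediate cost of acquisition.
   Context: $\Theta,\Lambda,\Omega$ finite nonempty; $\Delta(\Theta)$ the simplex. For $\theta\in\Theta,\lambda\in\Lambda$: known distributions $q_{\theta,\lambda}$ on $\Omega$ and $p_{\theta,\lambda}\in(0,1)$. Latent $\theta\sim\mu_0$. Survival $\nu_t$, $\nu_0=1$. At time $t$ with $\nu_t=1$ the agent either commits to a decision $\hat\theta\in\Theta$ or performs $\lambda_t\in\Lambda$; given $\theta$, $\nu_{t+1}=0$ w.p. $p_{\theta,\lambda_t}$, else $\nu_{t+1}=1$ and $\omega_{t+1}\sim q_{\theta,\lambda_t}$ is observed. Deadline $\delta=\min\{t:\nu_t=0\}$, $\tau=\min\{\delta,\sigma\}$ with $\sigma$ the decision time. Posterior updates: $M(\lambda,\mu,\omega)(\theta)\propto(1-p_{\theta,\lambda})q_{\theta,\lambda}(\omega)\mu(\theta)$, $\bar M(\lambda,\mu)(\theta)\propto p_{\theta,\lambda}\mu(\theta)$. Costs $c_\lambda>0$; weights $\eta=(\eta_a,\eta_b,\eta_c)$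 with positive entries. Loss $\ell=\sum_{\theta'}\eta_{a,\theta'}\mathbf 1\{\theta=\theta',\theta\neq\hat\theta,\tau<\delta\}+\sum_{\theta'}\eta_{b,\theta'}\mathbf 1\{\theta=\theta',\tau=\delta\}+\sum_{t<\tau}\eta_{c,\lambda_t}c_{\lambda_t}$. $V^*(\mu,\nu;\eta)$ is the optimal expected to-go loss. $\bar Q_{\hat\theta}(\mu,\nu;\eta)=(1-\nu)\sum_{\theta'}\eta_{b,\theta'}\mu(\theta')+\nu\sum_{\theta'\ne\hat\theta}\eta_{a,\theta'}\mu(\theta')$, $\bar Q=\min_{\hat\theta}\bar Q_{\hat\theta}$; $Q^*_\lambda(\mu,\nu;\eta)=(1-\nu)V^*(\mu,0;\eta)+\eta_{c,\lambda}c_\lambda+\nu\big(V^*(\bar M(\lambda,\mu),0;\eta)\sum_{\theta'}p_{\theta',\lambda}\mu(\theta')+\sum_\omega V^*(M(\lambda,\mu,\omega),1;\eta)\sum_{\theta'}(1-p_{\theta',\lambda})q_{\theta',\lambda}(\omega)\mu(\theta')\big)$, $Q^*=\min_\lambda Q^*_\lambda$; the optimal acquisition is $\lambda_t^*=\arg\inf_\lambda Q^*_\lambda(\mu_t,\nu_t;\eta)$. Termination set $\mathcal T(\eta)=\{\mu:Q^*(\mu,\nu_t;\eta)\ge\bar Q(\mu,\nu_t;\eta)\}$. For $U:\Delta(\Theta)\times\{0,1\}\to\mathbb{R}_+$, $(\mathbb{M}_\lambda U)(\mu,\nu)=(1-\nu)U(\mu,\nu)+\nu\,\mathbb{E}[U(M(\lambda,\mu,\omega),1)]$,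 where $\omega$ has the conditional law given survival, $\mathbb{P}(\omega)=\sum_{\theta'}(1-p_{\theta',\lambda})q_{\theta',\lambda}(\omega)\mu(\theta')/(1-\sum_{\theta'}p_{\theta',\lambda}\mu(\theta'))$. Surprise: $I_t(\lambda)=U(\mu_t,\nu_t)-\big(1-\sum_{\theta'}p_{\theta',\lambda}\mu_t(\theta')\big)(\mathbb{M}_\lambda U)(\mu_t,\nu_t)$. Suspense: $S_t(\lambda)=1-\frac{\sum_{\theta'}\eta_{b,\theta'}p_{\theta',\lambda}\mu_t(\theta')}{\sum_{\theta'}\eta_{b,\theta'}\mu_t(\theta')}$. *)

theory Defs
  imports "HOL-Analysis.Analysis"
begin

text \<open>Latent states: finite type 'th (Theta); acquisitions:
finite type 'l (Lambda); observations: finite type 'o (Omega).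
Beliefs mu are functions 'th \<Rightarrow> real (elements of the simplex when nonnegative and summing to 1).
Survival indicator nu is a bool (True = 1 = alive, False = 0 = deadline reached).
Model data: p th l = p_{theta,lambda}; q th l om = q_{theta,lambda}(omega); c l = c_lambda;
weights ea = eta_a, eb = eta_b, ec = eta_c.\<close>

definition nu_r :: "bool \<Rightarrow> real" where
  "nu_r nu = (if nu then 1 else 0)"

definition in_simplex :: "('th::finite \<Rightarrow> real) \<Rightarrow> bool" where
  "in_simplex mu \<longleftrightarrow> (\<forall>th. 0 \<le> mu th) \<and> (\<Sum>th\<in>UNIV. mu th) = 1"

definition death_prob :: "('th::finite \<Rightarrow> 'l \<Rightarrow> real) \<Rightarrow> 'l \<Rightarrow> ('th \<Rightarrow> real) \<Rightarrow> real" where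
  "death_prob p l mu = (\<Sum>th\<in>UNIV. p th l * mu th)"

definition joint_obs :: "('th::finite \<Rightarrow> 'l \<Rightarrow> real) \<Rightarrow> ('th \<Rightarrow> 'l \<Rightarrow> 'o \<Rightarrow> real)
    \<Rightarrow> 'l \<Rightarrow> ('th \<Rightarrow> real) \<Rightarrow> 'o \<Rightarrow> real" where
  "joint_obs p q l mu om = (\<Sum>th\<in>UNIV. (1 - p th l) * q th l om * mu th)"

definition Mpost :: "('th::finite \<Rightarrow> 'l \<Rightarrow> real) \<Rightarrow> ('th \<Rightarrow> 'l \<Rightarrow> 'o \<Rightarrow> real)
    \<Rightarrow> 'l \<Rightarrow> ('th \<Rightarrow> real) \<Rightarrow> 'o \<Rightarrow> ('th \<Rightarrow> real)" where
  "Mpost p q l mu om = (\<lambda>th. (1 - p th l) * q th l om * mu th / joint_obs p q l mu om)"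

definition Mbar :: "('th::finite \<Rightarrow> 'l \<Rightarrow> real) \<Rightarrow> 'l \<Rightarrow> ('th \<Rightarrow> real) \<Rightarrow> ('th \<Rightarrow> real)" where
  "Mbar p l mu = (\<lambda>th. p th l * mu th / death_prob p l mu)"

text \<open>A (deterministic, history-dependent) policy: given the history of performed
acquisitions and observations, either commit to a decision (Inl th) or acquire (Inr l).\<close>
type_synonym ('th, 'l, 'o) policy = "('l \<times> 'o) list \<Rightarrow> 'th + 'l"

text \<open>Expected loss of a policy accumulated during the first n steps, starting alive
with belief mu (Bayesian expectation over theta ~ mu, deaths and observations).\<close>
primrec trunc_loss :: "('th::finite \<Rightarrow> 'l \<Rightarrow> real) \<Rightarrow> ('th \<Rightarrow> 'l \<Rightarrow> 'o::finite \<Rightarrow> real)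
    \<Rightarrow> ('l \<Rightarrow> real) \<Rightarrow> ('th \<Rightarrow> real) \<Rightarrow> ('th \<Rightarrow> real) \<Rightarrow> ('l \<Rightarrow> real)
    \<Rightarrow> nat \<Rightarrow> ('th, 'l, 'o) policy \<Rightarrow> ('l \<times> 'o) list \<Rightarrow> ('th \<Rightarrow> real) \<Rightarrow> real" where
  "trunc_loss p q c ea eb ec 0 pol h mu = 0"
| "trunc_loss p q c ea eb ec (Suc n) pol h mu =
     (case pol h of
        Inl d \<Rightarrow> (\<Sum>th\<in>UNIV - {d}. ea th * mu th)
      | Inr l \<Rightarrow> ec l * c l + (\<Sum>th\<in>UNIV. eb th * p th l * mu th)
                 + (\<Sum>om\<in>UNIV. joint_obs p q l mu om *
                      trunc_loss p q c ea eb ec n pol (h @ [(l, om)]) (Mpost p q l mu om)))"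

text \<open>Expected (total) loss of a policy = limit (supremum) of the truncated expected losses
(all loss terms are nonnegative).\<close>
definition policy_loss where
  "policy_loss p q c ea eb ec pol mu = (SUP n. trunc_loss p q c ea eb ec n pol [] mu)"

definition Vstar :: "('th::finite \<Rightarrow> 'l \<Rightarrow> real) \<Rightarrow> ('th \<Rightarrow> 'l \<Rightarrow> 'o::finite \<Rightarrow> real)
    \<Rightarrow> ('l \<Rightarrow> real) \<Rightarrow> ('th \<Rightarrow> real) \<Rightarrow> ('th \<Rightarrow> real) \<Rightarrow> ('l \<Rightarrow> real)
    \<Rightarrow> ('th \<Rightarrow> real) \<Rightarrow> bool \<Rightarrow> real" where
  "Vstar p q c ea eb ec mu nu =
     (if nu then (INF pol :: ('th, 'l, 'o) policy. policy_loss p q c ea eb ec pol mu)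
      else (\<Sum>th\<in>UNIV. eb th * mu th))"

definition Qbar_dec :: "('th::finite \<Rightarrow> real) \<Rightarrow> ('th \<Rightarrow> real) \<Rightarrow> 'th \<Rightarrow> ('th \<Rightarrow> real) \<Rightarrow> bool \<Rightarrow> real" where
  "Qbar_dec ea eb d mu nu = (1 - nu_r nu) * (\<Sum>th\<in>UNIV. eb th * mu th)
      + nu_r nu * (\<Sum>th\<in>UNIV - {d}. ea th * mu th)"

definition Qbar :: "('th::finite \<Rightarrow> real) \<Rightarrow> ('th \<Rightarrow> real) \<Rightarrow> ('th \<Rightarrow> real) \<Rightarrow> bool \<Rightarrow> real" where
  "Qbar ea eb mu nu = Min (range (\<lambda>d. Qbar_dec ea eb d mu nu))"

definition Qstar_act :: "('th::finite \<Rightarrow> 'l \<Rightarrow> real) \<Rightarrow> ('th \<Rightarrow> 'l \<Rightarrow> 'o::finite \<Rightarrow> real)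
    \<Rightarrow> ('l \<Rightarrow> real) \<Rightarrow> ('th \<Rightarrow> real) \<Rightarrow> ('th \<Rightarrow> real) \<Rightarrow> ('l \<Rightarrow> real)
    \<Rightarrow> 'l \<Rightarrow> ('th \<Rightarrow> real) \<Rightarrow> bool \<Rightarrow> real" where
  "Qstar_act p q c ea eb ec l mu nu =
     (1 - nu_r nu) * Vstar p q c ea eb ec mu False + ec l * c l
     + nu_r nu * (Vstar p q c ea eb ec (Mbar p l mu) False * death_prob p l mu
        + (\<Sum>om\<in>UNIV. Vstar p q c ea eb ec (Mpost p q l mu om) True * joint_obs p q l mu om))"

definition Qstar :: "('th::finite \<Rightarrow> 'l::finite \<Rightarrow> real) \<Rightarrow> ('th \<Rightarrow> 'l \<Rightarrow> 'o::finite \<Rightarrow> real)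
    \<Rightarrow> ('l \<Rightarrow> real) \<Rightarrow> ('th \<Rightarrow> real) \<Rightarrow> ('th \<Rightarrow> real) \<Rightarrow> ('l \<Rightarrow> real)
    \<Rightarrow> ('th \<Rightarrow> real) \<Rightarrow> bool \<Rightarrow> real" where
  "Qstar p q c ea eb ec mu nu = Min (range (\<lambda>l. Qstar_act p q c ea eb ec l mu nu))"

definition term_set where
  "term_set p q c ea eb ec nu = {mu. Qstar p q c ea eb ec mu nu \<ge> Qbar ea eb mu nu}"

definition MM :: "('th::finite \<Rightarrow> 'l \<Rightarrow> real) \<Rightarrow> ('th \<Rightarrow> 'l \<Rightarrow> 'o::finite \<Rightarrow> real)
    \<Rightarrow> 'l \<Rightarrow> (('th \<Rightarrow> real) \<Rightarrow> bool \<Rightarrow> real) \<Rightarrow> ('th \<Rightarrow> real) \<Rightarrow> bool \<Rightarrow> real" where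
  "MM p q l U mu nu = (1 - nu_r nu) * U mu nu
     + nu_r nu * (\<Sum>om\<in>UNIV. (joint_obs p q l mu om / (1 - death_prob p l mu)) * U (Mpost p q l mu om) True)"

definition surprise where
  "surprise p q U l mu nu = U mu nu - (1 - death_prob p l mu) * MM p q l U mu nu"

definition suspense :: "('th::finite \<Rightarrow> 'l \<Rightarrow> real) \<Rightarrow> ('th \<Rightarrow> real) \<Rightarrow> 'l \<Rightarrow> ('th \<Rightarrow> real) \<Rightarrow> real" where
  "suspense p eb l mu = 1 - (\<Sum>th\<in>UNIV. eb th * p th l * mu th) / (\<Sum>th\<in>UNIV. eb th * mu th)"

end

theory Submission
  imports Defs
begin

text \<open>With \<open>U = V\<^sup>*\<close>, at a live state the observation term of \<open>Q\<^sup>*\<^sub>\<lambda>\<close> is exactly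
  \<open>V\<^sup>*(\<mu>,1) - I(\<lambda>)\<close>, and the deadline term is \<open>B (1 - S(\<lambda>))\<close> with
  \<open>B = \<Sum>\<theta> \<eta>\<^sub>b(\<theta>) \<mu>(\<theta>) > 0\<close>. Hence
  \<open>Q\<^sup>*\<^sub>\<lambda> = V\<^sup>*(\<mu>,1) + B - (I(\<lambda>) + B S(\<lambda>) - \<eta>\<^sub>c\<^sub>,\<^sub>\<lambda> c\<^sub>\<lambda>)\<close>, so minimising \<open>Q\<^sup>*\<^sub>\<lambda>\<close> means
  maximising \<open>h(I, S) - \<eta>\<^sub>c\<^sub>,\<^sub>\<lambda> c\<^sub>\<lambda>\<close> for the affine \<open>h(i, s) = i + B s\<close>.\<close>

lemma sum_weighted_simplex_pos:
  fixes f mu :: "'th::finite \<Rightarrow> real"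
  assumes f_pos: "\<And>th. 0 < f th" and mu: "in_simplex mu"
  shows "0 < (\<Sum>th\<in>UNIV. f th * mu th)"
proof -
  have mu_nonneg: "\<And>th. 0 \<le> mu th" and mu_sum: "(\<Sum>th\<in>UNIV. mu th) = 1"
    using mu unfolding in_simplex_def by auto
  obtain t where "0 < mu t"
    using mu_sum mu_nonneg by (metis less_eq_real_def sum.neutral zero_neq_one)
  then show ?thesis
    using f_pos mu_nonneg
    by (intro sum_pos2[where i=t]) (auto intro: mult_nonneg_nonneg less_imp_le)
qed

lemma death_prob_pos:
  assumes "\<And>th. 0 < p th l" and "in_simplex mu"
  shows "0 < death_prob p l mu"
  unfolding death_prob_def using assms by (rule sum_weighted_simplex_pos)

lemma survival_prob_pos:
  assumes "\<And>th. p th l < 1" and mu: "in_simplex mu"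
  shows "0 < 1 - death_prob p l mu"
proof -
  have "1 - death_prob p l mu = (\<Sum>th\<in>UNIV. (1 - p th l) * mu th)"
    using mu unfolding death_prob_def in_simplex_def
    by (simp add: algebra_simps sum_subtractf)
  also have "\<dots> > 0"
    using assms by (intro sum_weighted_simplex_pos) auto
  finally show ?thesis .
qed

lemma Vstar_Mbar_mult_death_prob:
  assumes "death_prob p l mu \<noteq> 0"
  shows "Vstar p q c ea eb ec (Mbar p l mu) False * death_prob p l mu
           = (\<Sum>th\<in>UNIV. eb th * p th l * mu th)"
  using assms unfolding Vstar_def Mbar_def
  by (simp add: sum_divide_distrib[symmetric] sum_distrib_right[symmetric] mult.assoc)

lemma suspense_scaled:
  assumes "(\<Sum>th\<in>UNIV. eb th * mu th) \<noteq> 0"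
  shows "(\<Sum>th\<in>UNIV. eb th * mu th) * suspense p eb l mu
           = (\<Sum>th\<in>UNIV. eb th * mu th) - (\<Sum>th\<in>UNIV. eb th * p th l * mu th)"
  using assms unfolding suspense_def by (simp add: field_simps)

lemma surprise_alive:
  assumes "1 - death_prob p l mu \<noteq> 0"
  shows "surprise p q U l mu True
           = U mu True - (\<Sum>om\<in>UNIV. U (Mpost p q l mu om) True * joint_obs p q l mu om)"
  using assms unfolding surprise_def MM_def nu_r_def
  by (simp add: sum_distrib_left mult.commute)

lemma Qstar_act_alive_eq:
  assumes p_pos: "\<And>th. 0 < p th l" and p_lt1: "\<And>th. p th l < 1"
    and eb_pos: "\<And>th. 0 < eb th" and mu: "in_simplex mu"
  defines "B \<equiv> \<Sum>th\<in>UNIV. eb th * mu th"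
  shows "Qstar_act p q c ea eb ec l mu True
           = Vstar p q c ea eb ec mu True + B
             - (surprise p q (Vstar p q c ea eb ec) l mu True + B * suspense p eb l mu
                - ec l * c l)"
proof -
  have "B \<noteq> 0"
    unfolding B_def using sum_weighted_simplex_pos[of eb mu] eb_pos mu by simp
  moreover have "death_prob p l mu \<noteq> 0"
    using death_prob_pos[of p l mu] p_pos mu by simp
  moreover have "1 - death_prob p l mu \<noteq> 0"
    using survival_prob_pos[of p l mu] p_lt1 mu by simp
  ultimately show ?thesis
    unfolding Qstar_act_def nu_r_def B_def
    by (simp add: Vstar_Mbar_mult_death_prob suspense_scaled surprise_alive)
qed

lemma argmin_eq_argmax_if_complement:
  fixes f g :: "'a \<Rightarrow> real"
  assumes "\<And>x. f x = K - g x"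
  shows "{x. \<forall>y. f x \<le> f y} = {x. \<forall>y. g y \<le> g x}"
  using assms by auto

theorem proposition5:
  fixes p :: "'th::finite \<Rightarrow> 'l::finite \<Rightarrow> real"
    and q :: "'th \<Rightarrow> 'l \<Rightarrow> 'o::finite \<Rightarrow> real"
    and c :: "'l \<Rightarrow> real"
    and ea eb :: "'th \<Rightarrow> real" and ec :: "'l \<Rightarrow> real"
    and mu :: "'th \<Rightarrow> real"
  assumes q_nonneg: "\<And>th l om. 0 \<le> q th l om"
    and q_sum: "\<And>th l. (\<Sum>om\<in>UNIV. q th l om) = 1"
    and p_pos: "\<And>th l. 0 < p th l" and p_lt1: "\<And>th l. p th l < 1"
    and c_pos: "\<And>l. 0 < c l"
    and ea_pos: "\<And>th. 0 < ea th" and eb_pos: "\<And>th. 0 < eb th" and ec_pos: "\<And>l. 0 < ec l"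
    and mu_simplex: "in_simplex mu"
    and not_term: "mu \<notin> term_set p q c ea eb ec True"
  shows "\<exists>h :: real \<Rightarrow> real \<Rightarrow> real.
           (\<forall>s. strict_mono (\<lambda>i. h i s)) \<and> (\<forall>i. strict_mono (\<lambda>s. h i s)) \<and>
           {l. \<forall>l'. Qstar_act p q c ea eb ec l mu True \<le> Qstar_act p q c ea eb ec l' mu True}
           = {l. \<forall>l'.
                h (surprise p q (Vstar p q c ea eb ec) l' mu True) (suspense p eb l' mu) - ec l' * c l'
                \<le> h (surprise p q (Vstar p q c ea eb ec) l mu True) (suspense p eb l mu) - ec l * c l}"
proof -
  \<comment> \<open>Only \<open>p_pos\<close>, \<open>p_lt1\<close>, \<open>eb_pos\<close> and \<open>mu_simplex\<close> are needed: the decomposition of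
     \<open>Q\<^sup>*\<^sub>\<lambda>\<close> holds at every belief, inside the termination set or not.\<close>
  define B where "B = (\<Sum>th\<in>UNIV. eb th * mu th)"
  define h where "h i s = i + B * s" for i s :: real
  have "0 < B"
    unfolding B_def by (rule sum_weighted_simplex_pos[OF eb_pos mu_simplex])
  then have h_mono: "(\<forall>s. strict_mono (\<lambda>i. h i s)) \<and> (\<forall>i. strict_mono (\<lambda>s. h i s))"
    unfolding h_def by (auto simp: strict_mono_def)
  have Q_eq:
    "Qstar_act p q c ea eb ec l mu True = (Vstar p q c ea eb ec mu True + B)
       - (h (surprise p q (Vstar p q c ea eb ec) l mu True) (suspense p eb l mu) - ec l * c l)"
    for l
    unfolding h_def B_def
    using Qstar_act_alive_eq[where p=p and l=l and eb=eb and mu=mu] p_pos p_lt1 eb_pos mu_simplex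
    by simp
  show ?thesis
    using h_mono Q_eq
    by (intro exI[of _ h] conjI argmin_eq_argmax_if_complement[where K = "Vstar p q c ea eb ec mu True + B"])
      auto
qed

end
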